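(* For every FEE problem $(I,O,\succsim_I,\omega)$ and every FTTC mechanism on the full preference domain, the output assignment $p$ is individually rational (i.e., $p_i\succsim^{sd}_i\omega_i$ for all $i\in I$) and sd-efficient (no assignment strictly stochastically dominates $p$).
   Context: Fractional endowment exchange (FEE) problem: a tuple $(I,O,\succsim_I,\omega)$ where $I$ is a finite set of agents, $O$ a finite set of objects, each agent $i$ has a complete and transitive (possibly non-strict) preference relation $\succsim_i$ over $O$ with asymmetric part $\succ_i$ and symmetric part $\sim_i$, and $\omega=(\omega_{i,o})_{i\in I,o\in O}$ is an endowment matrix with $\omega_{i,o}\in[0,1]$, $\sum_{o\in O}\omega_{i,o}\le 1$ for each $i$, and $q_o=\sum_{i\in I}\omega_{i,o}$ an integer for each $o$. An assignment is a nonnegative matrix $p=(p_{i,o})$ with $\sum_i p_{i,o}\le q_o$ for all $o$ and $\sum_o p_{i,o}\le 1$ for all $i$; $p_i=(p_{i,o})_{o\in O}$ is $i$'s lottery. Stochastic dominance: for vectors $l,l'\in\mathbb R^{O}_+$, $l\succsim^{sd}_i l'$ if $\sum_{o'\succsim_i o}l_{o'}\ge\sum_{o'\succsim_i o}l'_{o'}$ for all $o\in O$, strictly ($\succ^{sd}_i$) if moreover some inequality is strict. An assignment $p$ strictly stochastically dominates $p'$ if $p_i\succsim^{sd}_ip'_i$ for all $i$ and $p_j\succ^{sd}_jp'_j$ for some $j$. FTTC (Fractional Top Trading Cycle) on the full preference domain. Initialize $\omega(0)=\omega$, $p(0)=0$, $O(0)=O$. At step $d\ge1$ (with $O(d-1)\ne\emptyset$):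 (i) Labeling. Put $T_0=O(d-1)$. For $k=1,2,\dots$: let $L_k$ be the set of agents $i\notin L_1\cup\dots\cup L_{k-1}$ for which there exist $o\in T_{k-1}$ and $o'\in O\setminus(T_0\cup\dots\cup T_{k-1})$ with $p_{i,o'}(d-1)>0$ and $o\sim_i o'$; for $i\in L_k$ let $\tilde O_i(d-1)$ be the set of all such $o'$ for this $i$, and let $T_k=\bigcup_{i\in L_k}\tilde O_i(d-1)$. Stop at the first $k$ with $L_k=\emptyset$. Set $L(d-1)=\bigcup_k L_k$, $\tilde O(d-1)=\bigcup_{k\ge1}T_k$, $\overline{O}(d-1)=O(d-1)\cup\tilde O(d-1)$, and $\tilde O_i(d-1)=\emptyset$ for $i\notin L(d-1)$. (ii) Pointing. The active agents are $I(d-1)=L(d-1)\cup\{i\in I:\sum_o\omega_{i,o}(d-1)>0\}$. For $i\in I(d-1)$ let $B_i$ be the set of $\succsim_i$-maximal elements of $\overline{O}(d-1)$, let $k_i$ be the least $k\ge0$ with $B_i\cap T_k\ne\emptyset$, and let $A_i(d)=B_i\cap T_{k_i}$. (iii) Trading. The mechanism chooses (possibly depending on the history): a ratio matrix $\lambda(d)=(\lambda_{i,o}(d))_{i\in I(d-1),o\in\overline{O}(d-1)}$, nonnegative, with $\sum_{i\in I(d-1)}\lambda_{i,o}(d)=1$ for each $o\in\overline O(d-1)$, $\lambda_{i,o}(d)>0$ only if $\omega_{i,o}(d-1)>0$ (for $o\in O(d-1)$) and only if $o\in\tilde O_i(d-1)$ (for $o\in\tilde O(d-1)$); a quota matrix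 $\beta(d)$ on $I(d-1)\times O(d-1)$ with $0\le\beta_{i,o}(d)\le\omega_{i,o}(d-1)$; a division matrix $\gamma(d)$ on $I(d-1)\times\overline O(d-1)$, nonnegative, with $\sum_o\gamma_{i,o}(d)=1$ and $\gamma_{i,o}(d)>0$ only if $o\in A_i(d)$. Let $x^*(d)=(x^*_a(d))_{a\in I(d-1)\cup\overline O(d-1)}$ be the maximum (componentwise largest) nonnegative solution of $x_o=\sum_{i\in I(d-1)}\gamma_{i,o}(d)x_i$ for all $o\in\overline O(d-1)$ and $x_i=\sum_{o\in\overline O(d-1)}\lambda_{i,o}(d)x_o$ for all $i\in I(d-1)$, subject to $\lambda_{i,o}(d)x_o\le\beta_{i,o}(d)$ for $o\in O(d-1)$ and $\lambda_{i,o}(d)x_o\le p_{i,o}(d-1)$ for $o\in\tilde O(d-1)$. For $i\in I(d-1)$: $\omega_{i,o}(d)=\omega_{i,o}(d-1)-\lambda_{i,o}(d)x^*_o(d)$ if $o\in O(d-1)$ and $0$ otherwise; $p_{i,o}(d)=p_{i,o}(d-1)-\mathbf 1[o\in\tilde O_i(d-1)]\lambda_{i,o}(d)x^*_o(d)+\gamma_{i,o}(d)x^*_i(d)$ (with $\gamma_{i,o}(d)=0$ for $o\notin\overline O(d-1)$). For $i\notin I(d-1)$, $\omega_i(d)=\omega_i(d-1)$, $p_i(d)=p_i(d-1)$. Let $O(d)=\{o\in O(d-1):\sum_i\omega_{i,o}(d)>0\}$. If $O(d)=\emptyset$ stop and output $p(d)$; otherwise go to step $d+1$. (Standing assumption: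 the maximum solution exists at each step and the procedure ends after finitely many steps.) An FTTC mechanism is specified by a rule choosing $\lambda(d),\beta(d),\gamma(d)$ at every step. *)

theory Defs
  imports Complex_Main
begin

(* Preferences: R i a b means  a \<succsim>_i b.  Agents have type 'i, objects type 'o.
   The finite sets of agents and objects are I and Os. *)

definition indiff :: "('i \<Rightarrow> 'o \<Rightarrow> 'o \<Rightarrow> bool) \<Rightarrow> 'i \<Rightarrow> 'o \<Rightarrow> 'o \<Rightarrow> bool" where
  "indiff R i a b \<longleftrightarrow> R i a b \<and> R i b a"

definition fee_problem ::
  "'i set \<Rightarrow> 'o set \<Rightarrow> ('i \<Rightarrow> 'o \<Rightarrow> 'o \<Rightarrow> bool) \<Rightarrow> ('i \<Rightarrow> 'o \<Rightarrow> real) \<Rightarrow> bool" where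
  "fee_problem I Os R \<omega> \<longleftrightarrow>
     finite I \<and> finite Os \<and>
     (\<forall>i\<in>I. (\<forall>a\<in>Os. \<forall>b\<in>Os. R i a b \<or> R i b a) \<and>
             (\<forall>a\<in>Os. \<forall>b\<in>Os. \<forall>c\<in>Os. R i a b \<longrightarrow> R i b c \<longrightarrow> R i a c)) \<and>
     (\<forall>i\<in>I. \<forall>ob\<in>Os. 0 \<le> \<omega> i ob \<and> \<omega> i ob \<le> 1) \<and>
     (\<forall>i\<in>I. (\<Sum>ob\<in>Os. \<omega> i ob) \<le> 1) \<and>
     (\<forall>ob\<in>Os. (\<Sum>i\<in>I. \<omega> i ob) \<in> \<int>)"

definition quota :: "'i set \<Rightarrow> ('i \<Rightarrow> 'o \<Rightarrow> real) \<Rightarrow> 'o \<Rightarrow> real" where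
  "quota I \<omega> ob = (\<Sum>i\<in>I. \<omega> i ob)"

definition is_assignment ::
  "'i set \<Rightarrow> 'o set \<Rightarrow> ('i \<Rightarrow> 'o \<Rightarrow> real) \<Rightarrow> ('i \<Rightarrow> 'o \<Rightarrow> real) \<Rightarrow> bool" where
  "is_assignment I Os \<omega> p \<longleftrightarrow>
     (\<forall>i\<in>I. \<forall>ob\<in>Os. 0 \<le> p i ob) \<and>
     (\<forall>ob\<in>Os. (\<Sum>i\<in>I. p i ob) \<le> quota I \<omega> ob) \<and>
     (\<forall>i\<in>I. (\<Sum>ob\<in>Os. p i ob) \<le> 1)"

definition sd_geq ::
  "'o set \<Rightarrow> ('i \<Rightarrow> 'o \<Rightarrow> 'o \<Rightarrow> bool) \<Rightarrow> 'i \<Rightarrow> ('o \<Rightarrow> real) \<Rightarrow> ('o \<Rightarrow> real) \<Rightarrow> bool" where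
  "sd_geq Os R i l l' \<longleftrightarrow>
     (\<forall>ob\<in>Os. (\<Sum>ob'\<in>{ob'\<in>Os. R i ob' ob}. l ob') \<ge> (\<Sum>ob'\<in>{ob'\<in>Os. R i ob' ob}. l' ob'))"

definition sd_gt ::
  "'o set \<Rightarrow> ('i \<Rightarrow> 'o \<Rightarrow> 'o \<Rightarrow> bool) \<Rightarrow> 'i \<Rightarrow> ('o \<Rightarrow> real) \<Rightarrow> ('o \<Rightarrow> real) \<Rightarrow> bool" where
  "sd_gt Os R i l l' \<longleftrightarrow> sd_geq Os R i l l' \<and>
     (\<exists>ob\<in>Os. (\<Sum>ob'\<in>{ob'\<in>Os. R i ob' ob}. l ob') > (\<Sum>ob'\<in>{ob'\<in>Os. R i ob' ob}. l' ob'))"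

definition sd_dominates ::
  "'i set \<Rightarrow> 'o set \<Rightarrow> ('i \<Rightarrow> 'o \<Rightarrow> 'o \<Rightarrow> bool) \<Rightarrow> ('i \<Rightarrow> 'o \<Rightarrow> real) \<Rightarrow> ('i \<Rightarrow> 'o \<Rightarrow> real) \<Rightarrow> bool" where
  "sd_dominates I Os R p p' \<longleftrightarrow>
     (\<forall>i\<in>I. sd_geq Os R i (p i) (p' i)) \<and> (\<exists>j\<in>I. sd_gt Os R j (p j) (p' j))"

definition individually_rational ::
  "'i set \<Rightarrow> 'o set \<Rightarrow> ('i \<Rightarrow> 'o \<Rightarrow> 'o \<Rightarrow> bool) \<Rightarrow> ('i \<Rightarrow> 'o \<Rightarrow> real) \<Rightarrow> ('i \<Rightarrow> 'o \<Rightarrow> real) \<Rightarrow> bool" where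
  "individually_rational I Os R \<omega> p \<longleftrightarrow> (\<forall>i\<in>I. sd_geq Os R i (p i) (\<omega> i))"

definition sd_efficient ::
  "'i set \<Rightarrow> 'o set \<Rightarrow> ('i \<Rightarrow> 'o \<Rightarrow> 'o \<Rightarrow> bool) \<Rightarrow> ('i \<Rightarrow> 'o \<Rightarrow> real) \<Rightarrow> ('i \<Rightarrow> 'o \<Rightarrow> real) \<Rightarrow> bool" where
  "sd_efficient I Os R \<omega> p \<longleftrightarrow> is_assignment I Os \<omega> p \<and>
     \<not> (\<exists>p'. is_assignment I Os \<omega> p' \<and> sd_dominates I Os R p' p)"

(* \<tilde>O_i contribution at a labeling level: objects ob' outside U (= T_0 \<union> ... \<union> T_{k-1})
   with p_{i,ob'} > 0 that are indifferent to some ob in Tprev (= T_{k-1}) *)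
definition lab_objs ::
  "('i \<Rightarrow> 'o \<Rightarrow> 'o \<Rightarrow> bool) \<Rightarrow> 'o set \<Rightarrow> ('i \<Rightarrow> 'o \<Rightarrow> real) \<Rightarrow> 'i \<Rightarrow> 'o set \<Rightarrow> 'o set \<Rightarrow> 'o set" where
  "lab_objs R Os p i Tprev U = {ob'\<in>Os - U. p i ob' > 0 \<and> (\<exists>ob\<in>Tprev. indiff R i ob ob')}"

(* labeling: lab k = (T_k, L_k, T_0 \<union> ... \<union> T_k, L_1 \<union> ... \<union> L_k), with L_0 = {} *)
fun lab ::
  "'i set \<Rightarrow> 'o set \<Rightarrow> ('i \<Rightarrow> 'o \<Rightarrow> 'o \<Rightarrow> bool) \<Rightarrow> ('i \<Rightarrow> 'o \<Rightarrow> real) \<Rightarrow> 'o set \<Rightarrow> nat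
   \<Rightarrow> 'o set \<times> 'i set \<times> 'o set \<times> 'i set" where
  "lab I Os R p Od 0 = (Od, {}, Od, {})"
| "lab I Os R p Od (Suc k) =
     (case lab I Os R p Od k of (T, L, U, Lc) \<Rightarrow>
        let L' = {i\<in>I. i \<notin> Lc \<and> lab_objs R Os p i T U \<noteq> {}};
            T' = (\<Union>i\<in>L'. lab_objs R Os p i T U)
        in (T', L', U \<union> T', Lc \<union> L'))"

definition labT where "labT I Os R p Od k = fst (lab I Os R p Od k)"
definition labL where "labL I Os R p Od k = fst (snd (lab I Os R p Od k))"
definition labU where "labU I Os R p Od k = fst (snd (snd (lab I Os R p Od k)))"

definition Lset where "Lset I Os R p Od = (\<Union>k. labL I Os R p Od (Suc k))"
definition Otil where "Otil I Os R p Od = (\<Union>k. labT I Os R p Od (Suc k))"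
definition Otil_i where
  "Otil_i I Os R p Od i = (\<Union>k. if i \<in> labL I Os R p Od (Suc k)
        then lab_objs R Os p i (labT I Os R p Od k) (labU I Os R p Od k) else {})"
definition Obar where "Obar I Os R p Od = Od \<union> Otil I Os R p Od"

definition active where
  "active I Os R \<omega> p Od = Lset I Os R p Od \<union> {i\<in>I. (\<Sum>ob\<in>Os. \<omega> i ob) > 0}"

definition Bset where
  "Bset I Os R p Od i = {ob\<in>Obar I Os R p Od. \<forall>ob'\<in>Obar I Os R p Od. R i ob ob'}"
definition Aset where
  "Aset I Os R p Od i =
     Bset I Os R p Od i \<inter> labT I Os R p Od (LEAST k. Bset I Os R p Od i \<inter> labT I Os R p Od k \<noteq> {})"

definition trade_feasible where
  "trade_feasible I Os R \<omega> p Od lam \<beta> \<gamma> xi xo \<longleftrightarrow>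
     (let Ia = active I Os R \<omega> p Od; Ob = Obar I Os R p Od; Ot = Otil I Os R p Od in
       (\<forall>i\<in>Ia. xi i \<ge> 0) \<and> (\<forall>ob\<in>Ob. xo ob \<ge> 0) \<and>
       (\<forall>ob\<in>Ob. xo ob = (\<Sum>i\<in>Ia. \<gamma> i ob * xi i)) \<and>
       (\<forall>i\<in>Ia. xi i = (\<Sum>ob\<in>Ob. lam i ob * xo ob)) \<and>
       (\<forall>i\<in>Ia. \<forall>ob\<in>Od. lam i ob * xo ob \<le> \<beta> i ob) \<and>
       (\<forall>i\<in>Ia. \<forall>ob\<in>Ot. lam i ob * xo ob \<le> p i ob))"

(* one step d of FTTC: from (\<omega>(d-1), p(d-1), Os(d-1)) to (\<omega>(d), p(d), Os(d)), for some
   admissible choice of ratio matrix \<lambda>, quota matrix \<beta> and division matrix \<gamma> *)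
definition fttc_step ::
  "'i set \<Rightarrow> 'o set \<Rightarrow> ('i \<Rightarrow> 'o \<Rightarrow> 'o \<Rightarrow> bool)
   \<Rightarrow> ('i \<Rightarrow> 'o \<Rightarrow> real) \<times> ('i \<Rightarrow> 'o \<Rightarrow> real) \<times> 'o set
   \<Rightarrow> ('i \<Rightarrow> 'o \<Rightarrow> real) \<times> ('i \<Rightarrow> 'o \<Rightarrow> real) \<times> 'o set \<Rightarrow> bool" where
  "fttc_step I Os R s s' \<longleftrightarrow>
     (case s of (\<omega>, p, Od) \<Rightarrow> case s' of (\<omega>', p', Od') \<Rightarrow>
      Od \<noteq> {} \<and>
      (let Ia = active I Os R \<omega> p Od; Ob = Obar I Os R p Od; Ot = Otil I Os R p Od in
       \<exists>lam \<beta> \<gamma> xi xo.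
         \<comment> \<open>ratio matrix\<close>
         (\<forall>i\<in>Ia. \<forall>ob\<in>Ob. lam i ob \<ge> 0) \<and>
         (\<forall>ob\<in>Ob. (\<Sum>i\<in>Ia. lam i ob) = 1) \<and>
         (\<forall>i\<in>Ia. \<forall>ob\<in>Od. lam i ob > 0 \<longrightarrow> \<omega> i ob > 0) \<and>
         (\<forall>i\<in>Ia. \<forall>ob\<in>Ot. lam i ob > 0 \<longrightarrow> ob \<in> Otil_i I Os R p Od i) \<and>
         \<comment> \<open>quota matrix\<close>
         (\<forall>i\<in>Ia. \<forall>ob\<in>Od. 0 \<le> \<beta> i ob \<and> \<beta> i ob \<le> \<omega> i ob) \<and>
         \<comment> \<open>division matrix\<close>
         (\<forall>i\<in>Ia. \<forall>ob\<in>Ob. \<gamma> i ob \<ge> 0) \<and>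
         (\<forall>i\<in>Ia. (\<Sum>ob\<in>Ob. \<gamma> i ob) = 1) \<and>
         (\<forall>i\<in>Ia. \<forall>ob\<in>Ob. \<gamma> i ob > 0 \<longrightarrow> ob \<in> Aset I Os R p Od i) \<and>
         \<comment> \<open>x* is the maximum nonnegative solution\<close>
         trade_feasible I Os R \<omega> p Od lam \<beta> \<gamma> xi xo \<and>
         (\<forall>yi yo. trade_feasible I Os R \<omega> p Od lam \<beta> \<gamma> yi yo \<longrightarrow>
              (\<forall>i\<in>Ia. yi i \<le> xi i) \<and> (\<forall>ob\<in>Ob. yo ob \<le> xo ob)) \<and>
         \<comment> \<open>updates\<close>
         (\<forall>i ob. \<omega>' i ob = (if i \<in> Ia then (if ob \<in> Od then \<omega> i ob - lam i ob * xo ob else 0)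
                          else \<omega> i ob)) \<and>
         (\<forall>i ob. p' i ob = (if i \<in> Ia then
                           p i ob - (if ob \<in> Otil_i I Os R p Od i then lam i ob * xo ob else 0)
                                 + (if ob \<in> Ob then \<gamma> i ob * xi i else 0)
                          else p i ob)) \<and>
         Od' = {ob\<in>Od. (\<Sum>i\<in>I. \<omega>' i ob) > 0}))"

definition fttc_output ::
  "'i set \<Rightarrow> 'o set \<Rightarrow> ('i \<Rightarrow> 'o \<Rightarrow> 'o \<Rightarrow> bool) \<Rightarrow> ('i \<Rightarrow> 'o \<Rightarrow> real)
   \<Rightarrow> ('i \<Rightarrow> 'o \<Rightarrow> real) \<Rightarrow> bool" where
  "fttc_output I Os R \<omega> p \<longleftrightarrow>
     (\<exists>(n::nat) s. s 0 = (\<omega>, (\<lambda>_ _. 0), Os) \<and>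
        (\<forall>d<n. fttc_step I Os R (s d) (s (Suc d))) \<and>
        snd (snd (s n)) = {} \<and> p = fst (snd (s n)))"

end

theory Submission
  imports Defs
begin

text \<open>
  Call p + \<omega> the holdings of an agent: its assigned shares together with its unsold endowment.
  In every trading step an agent gives away shares of objects in Obar and receives shares only of
  objects it points at, which are its favourites in Obar; hence holdings keep their row and column
  sums and improve in the sd sense. At termination no endowment is left, so the output
  sd-dominates the endowment and is an assignment exhausting the quotas.

  Efficiency is a supporting-price argument. Price every object by 1 plus the number of steps at
  which it lies outside Obar. Obar only shrinks, and an object acquired by an agent is a favourite
  of that agent in the current Obar, so every object an agent finally holds is the cheapest among
  those it weakly prefers, and strictly preferred objects are strictly more expensive. An
  sd-improvement of a lottery then does not lower its price, and a strict one raises it; summing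
  over agents, an assignment sd-dominating the output would cost more than the quotas allow.
\<close>

section \<open>Total preorders and sums over upper sets\<close>

definition total_preorder_on :: "'a set \<Rightarrow> ('a \<Rightarrow> 'a \<Rightarrow> bool) \<Rightarrow> bool" where
  "total_preorder_on S Q \<longleftrightarrow>
     (\<forall>a\<in>S. \<forall>b\<in>S. Q a b \<or> Q b a) \<and> (\<forall>a\<in>S. \<forall>b\<in>S. \<forall>c\<in>S. Q a b \<longrightarrow> Q b c \<longrightarrow> Q a c)"

lemma total_preorder_onD:
  assumes "total_preorder_on S Q"
  shows total_preorder_on_total: "a \<in> S \<Longrightarrow> b \<in> S \<Longrightarrow> \<not> Q a b \<Longrightarrow> Q b a"
    and total_preorder_on_refl: "a \<in> S \<Longrightarrow> Q a a"
    and total_preorder_on_trans: "a \<in> S \<Longrightarrow> b \<in> S \<Longrightarrow> c \<in> S \<Longrightarrow> Q a b \<Longrightarrow> Q b c \<Longrightarrow> Q a c"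
  using assms unfolding total_preorder_on_def by blast+

lemma total_preorder_on_subset: "total_preorder_on S Q \<Longrightarrow> T \<subseteq> S \<Longrightarrow> total_preorder_on T Q"
  unfolding total_preorder_on_def by blast

lemma fee_problem_total_preorder_on:
  "fee_problem I Os R \<omega> \<Longrightarrow> i \<in> I \<Longrightarrow> total_preorder_on Os (R i)"
  unfolding fee_problem_def total_preorder_on_def by blast

lemma total_preorder_on_has_bottom:
  assumes "finite S" "S \<noteq> {}" "total_preorder_on S Q"
  shows "\<exists>m\<in>S. \<forall>x\<in>S. Q x m"
  using assms
proof (induction S rule: finite_ne_induct)
  case (singleton x)
  then show ?case by (auto dest: total_preorder_on_refl)
next
  case (insert y S)
  then obtain m where m: "m \<in> S" "\<forall>x\<in>S. Q x m"
    using total_preorder_on_subset[of "insert y S" Q S] by blast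
  show ?case
  proof (cases "Q y m")
    case True
    with m show ?thesis by blast
  next
    case False
    then have "Q m y" using insert.prems m(1) by (auto intro: total_preorder_on_total)
    then have "\<forall>x\<in>insert y S. Q x y"
      using m insert.prems by (auto intro: total_preorder_on_refl total_preorder_on_trans)
    then show ?thesis by blast
  qed
qed

lemma upper_sum_le_if_mass_moved_to_top:
  fixes g r :: "'a \<Rightarrow> real"
  assumes "finite S" and Q: "total_preorder_on S Q" and "z \<in> S"
    and "\<forall>x\<in>S. 0 \<le> g x" "\<forall>x\<in>S. 0 \<le> r x" "\<forall>x\<in>S - B. g x = 0"
    and top: "\<forall>x\<in>S. 0 < r x \<longrightarrow> x \<in> B \<and> (\<forall>b\<in>B. Q x b)"
    and "sum g S \<le> sum r S"
  shows "(\<Sum>x\<in>{x\<in>S. Q x z}. g x) \<le> (\<Sum>x\<in>{x\<in>S. Q x z}. r x)"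
proof (cases "\<exists>y\<in>S. \<not> Q y z \<and> 0 < r y")
  case True
  then obtain y where y: "y \<in> S" "\<not> Q y z" "0 < r y" by blast
  have "g x = 0" if x: "x \<in> S" "Q x z" for x
  proof -
    have "x \<notin> B"
      using top y x \<open>z \<in> S\<close> total_preorder_on_trans[OF Q] by blast
    then show ?thesis using x assms(6) by blast
  qed
  then have "(\<Sum>x\<in>{x\<in>S. Q x z}. g x) = 0" by simp
  also have "\<dots> \<le> (\<Sum>x\<in>{x\<in>S. Q x z}. r x)" using assms(5) by (intro sum_nonneg) auto
  finally show ?thesis .
next
  case False
  have "(\<Sum>x\<in>{x\<in>S. Q x z}. g x) \<le> sum g S"
    using assms(1,4) by (intro sum_mono2) auto
  also have "\<dots> \<le> sum r S" by fact
  also have "\<dots> = (\<Sum>x\<in>{x\<in>S. Q x z}. r x)"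
    using False assms(1,5) by (intro sum.mono_neutral_right) force+
  finally show ?thesis .
qed

lemma sum_mult_nonneg_if_upper_sums_nonneg:
  fixes u d :: "'a \<Rightarrow> real"
  assumes "finite S" "total_preorder_on S Q"
    and "\<forall>a\<in>S. \<forall>b\<in>S. Q a b \<longrightarrow> u b \<le> u a" "\<forall>a\<in>S. 0 \<le> u a"
    and "\<forall>z\<in>S. 0 \<le> (\<Sum>x\<in>{x\<in>S. Q x z}. d x)"
  shows "0 \<le> (\<Sum>x\<in>S. u x * d x)"
  using assms
proof (induction "card S" arbitrary: S u rule: less_induct)
  case less
  note fin = less.prems(1) and Q = less.prems(2) and mono = less.prems(3)
    and nonneg = less.prems(4) and upper = less.prems(5)
  show ?case
  proof (cases "S = {}")
    case False
    then obtain m where m: "m \<in> S" "\<forall>x\<in>S. Q x m"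
      using total_preorder_on_has_bottom fin Q by blast
    \<comment> \<open>split off the bottom class of m, on which \<open>u - u m\<close> vanishes\<close>
    define S' where "S' = {x\<in>S. \<not> Q m x}"
    have "S' \<subset> S" using m total_preorder_on_refl[OF Q] by (auto simp: S'_def)
    then have card: "card S' < card S" by (rule psubset_card_mono[OF fin])
    have S'_upper: "{x\<in>S'. Q x z} = {x\<in>S. Q x z}" if "z \<in> S'" for z
      using that m(1) total_preorder_on_trans[OF Q, of m _ z] by (auto simp: S'_def)
    have "0 \<le> (\<Sum>x\<in>S'. (u x - u m) * d x)"
    proof (rule less.hyps[OF card])
      show "finite S'" "total_preorder_on S' Q"
        using fin total_preorder_on_subset[OF Q] by (auto simp: S'_def)
      show "\<forall>a\<in>S'. \<forall>b\<in>S'. Q a b \<longrightarrow> u b - u m \<le> u a - u m"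
        using mono by (auto simp: S'_def)
      show "\<forall>a\<in>S'. 0 \<le> u a - u m"
        using mono m by (auto simp: S'_def)
      show "\<forall>z\<in>S'. 0 \<le> (\<Sum>x\<in>{x\<in>S'. Q x z}. d x)"
        using upper S'_upper by (auto simp: S'_def)
    qed
    moreover have "(\<Sum>x\<in>S. (u x - u m) * d x) = (\<Sum>x\<in>S'. (u x - u m) * d x)"
      using mono m by (intro sum.mono_neutral_right[OF fin]) (auto simp: S'_def intro: antisym)
    moreover have "0 \<le> u m * (\<Sum>x\<in>S. d x)"
    proof -
      have "{x\<in>S. Q x m} = S" using m by blast
      then show ?thesis using upper m nonneg by (metis mult_nonneg_nonneg)
    qed
    moreover have "(\<Sum>x\<in>S. u x * d x) = u m * (\<Sum>x\<in>S. d x) + (\<Sum>x\<in>S. (u x - u m) * d x)"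
      by (simp add: algebra_simps sum.distrib sum_distrib_left sum_subtractf)
    ultimately show ?thesis by linarith
  qed simp
qed

lemma sum_mult_pos_if_upper_sum_pos:
  fixes u d :: "'a \<Rightarrow> real"
  assumes fin: "finite S" and Q: "total_preorder_on S Q" and z: "z \<in> S"
    and mono: "\<forall>a\<in>S. \<forall>b\<in>S. Q a b \<longrightarrow> u b \<le> u a"
    and gap: "\<forall>a\<in>S. \<forall>b\<in>S. Q a z \<longrightarrow> \<not> Q b z \<longrightarrow> u b + 1 \<le> u a"
    and "\<forall>a\<in>S. Q a z \<longrightarrow> 1 \<le> u a" "\<forall>a\<in>S. 0 \<le> u a"
    and upper: "\<forall>y\<in>S. 0 \<le> (\<Sum>x\<in>{x\<in>S. Q x y}. d x)"
    and gain: "0 < (\<Sum>x\<in>{x\<in>S. Q x z}. d x)"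
  shows "0 < (\<Sum>x\<in>S. u x * d x)"
proof -
  define w where "w x = u x - (if Q x z then 1 else 0)" for x
  have "0 \<le> (\<Sum>x\<in>S. w x * d x)"
  proof (rule sum_mult_nonneg_if_upper_sums_nonneg[OF fin Q _ _ upper])
    show "\<forall>a\<in>S. \<forall>b\<in>S. Q a b \<longrightarrow> w b \<le> w a"
    proof (intro ballI impI)
      fix a b assume ab: "a \<in> S" "b \<in> S" "Q a b"
      have "Q a z" if "Q b z" using that ab z total_preorder_on_trans[OF Q] by blast
      then show "w b \<le> w a" using mono gap ab unfolding w_def by fastforce
    qed
    show "\<forall>a\<in>S. 0 \<le> w a" using assms(6,7) unfolding w_def by auto
  qed
  moreover have "(\<Sum>x\<in>S. u x * d x) = (\<Sum>x\<in>S. w x * d x) + (\<Sum>x\<in>{x\<in>S. Q x z}. d x)"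
    unfolding sum.inter_filter[OF fin] w_def
    by (simp add: left_diff_distrib sum_subtractf if_distrib[of "\<lambda>c. c * _"])
  ultimately show ?thesis using gain by linarith
qed

section \<open>Supporting prices\<close>

definition min_price_above :: "'a set \<Rightarrow> ('a \<Rightarrow> 'a \<Rightarrow> bool) \<Rightarrow> ('a \<Rightarrow> nat) \<Rightarrow> 'a \<Rightarrow> nat" where
  "min_price_above S Q pr z = Min (pr ` {x\<in>S. Q x z})"

definition price_supported :: "'a set \<Rightarrow> ('a \<Rightarrow> 'a \<Rightarrow> bool) \<Rightarrow> ('a \<Rightarrow> nat) \<Rightarrow> ('a \<Rightarrow> real) \<Rightarrow> bool" where
  "price_supported S Q pr l \<longleftrightarrow>
     (\<forall>x\<in>S. 0 < l x \<longrightarrow> (\<forall>y\<in>S. Q y x \<longrightarrow> pr x \<le> pr y \<and> (\<not> Q x y \<longrightarrow> pr x < pr y)))"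

context
  fixes S :: "'a set" and Q :: "'a \<Rightarrow> 'a \<Rightarrow> bool" and pr :: "'a \<Rightarrow> nat"
  assumes fin: "finite S" and Q: "total_preorder_on S Q"
begin

lemma min_price_above_le: "x \<in> S \<Longrightarrow> Q x z \<Longrightarrow> min_price_above S Q pr z \<le> pr x"
  unfolding min_price_above_def using fin by (intro Min_le) auto

lemma min_price_above_attained:
  assumes "z \<in> S"
  obtains x where "x \<in> S" "Q x z" "min_price_above S Q pr z = pr x"
proof -
  have "z \<in> {x\<in>S. Q x z}" using assms total_preorder_on_refl[OF Q] by blast
  then have "min_price_above S Q pr z \<in> pr ` {x\<in>S. Q x z}"
    unfolding min_price_above_def using fin by (intro Min_in) auto
  then show ?thesis using that by blast
qed

lemma min_price_above_antimono:
  assumes "a \<in> S" "b \<in> S" "Q a b"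
  shows "min_price_above S Q pr b \<le> min_price_above S Q pr a"
proof -
  have "{x\<in>S. Q x a} \<subseteq> {x\<in>S. Q x b}"
    using assms total_preorder_on_trans[OF Q] by blast
  moreover have "a \<in> {x\<in>S. Q x a}" using assms total_preorder_on_refl[OF Q] by blast
  ultimately show ?thesis
    unfolding min_price_above_def using fin by (intro Min_antimono image_mono) auto
qed

lemma min_price_above_eq_price:
  assumes "price_supported S Q pr l" "x \<in> S" "0 < l x"
  shows "min_price_above S Q pr x = pr x"
proof -
  obtain y where "y \<in> S" "Q y x" "min_price_above S Q pr x = pr y"
    using min_price_above_attained[OF assms(2)] .
  moreover have "pr x \<le> pr y" using assms calculation unfolding price_supported_def by blast
  moreover have "min_price_above S Q pr x \<le> pr x"
    using min_price_above_le assms(2) total_preorder_on_refl[OF Q] by blast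
  ultimately show ?thesis by linarith
qed

lemma price_less_min_price_above:
  assumes "price_supported S Q pr l" "x \<in> S" "0 < l x" "z \<in> S" "\<not> Q x z"
  shows "pr x < min_price_above S Q pr z"
proof -
  obtain y where y: "y \<in> S" "Q y z" "min_price_above S Q pr z = pr y"
    using min_price_above_attained[OF assms(4)] .
  have "\<not> Q x y" using y assms total_preorder_on_trans[OF Q] by blast
  then have "Q y x" using y assms total_preorder_on_total[OF Q] by blast
  with \<open>\<not> Q x y\<close> have "pr x < pr y" using assms y unfolding price_supported_def by blast
  with y show ?thesis by simp
qed

end

lemma utility_gain_le_value_gain:
  fixes u v l l' :: "'a \<Rightarrow> real"
  assumes "\<forall>x\<in>S. u x \<le> v x" "\<forall>x\<in>S. 0 < l x \<longrightarrow> u x = v x"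
    and "\<forall>x\<in>S. 0 \<le> l x" "\<forall>x\<in>S. 0 \<le> l' x"
  shows "(\<Sum>x\<in>S. u x * (l' x - l x)) \<le> (\<Sum>x\<in>S. v x * l' x) - (\<Sum>x\<in>S. v x * l x)"
proof -
  have "(\<Sum>x\<in>S. u x * l x) = (\<Sum>x\<in>S. v x * l x)"
    using assms(2,3) by (intro sum.cong) (auto simp: less_le)
  moreover have "(\<Sum>x\<in>S. u x * l' x) \<le> (\<Sum>x\<in>S. v x * l' x)"
    using assms(1,4) by (intro sum_mono mult_right_mono) auto
  ultimately show ?thesis by (simp add: right_diff_distrib sum_subtractf)
qed

lemma sd_geq_trans: "sd_geq S R i l1 l2 \<Longrightarrow> sd_geq S R i l2 l3 \<Longrightarrow> sd_geq S R i l1 l3"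
  unfolding sd_geq_def by (meson order_trans)

lemma upper_sums_nonneg_if_sd_geq:
  "sd_geq S R i l' l \<Longrightarrow> \<forall>z\<in>S. 0 \<le> (\<Sum>x\<in>{x\<in>S. R i x z}. l' x - l x)"
  unfolding sd_geq_def by (simp add: sum_subtractf)

lemma price_value_le_if_sd_geq:
  assumes fin: "finite S" and R: "total_preorder_on S (R i)"
    and supp: "price_supported S (R i) pr l"
    and "\<forall>x\<in>S. 0 \<le> l x" "\<forall>x\<in>S. 0 \<le> l' x" "sd_geq S R i l' l"
  shows "(\<Sum>x\<in>S. real (pr x) * l x) \<le> (\<Sum>x\<in>S. real (pr x) * l' x)"
proof -
  let ?M = "\<lambda>z. real (min_price_above S (R i) pr z)"
  have "0 \<le> (\<Sum>x\<in>S. ?M x * (l' x - l x))"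
    using min_price_above_antimono[OF fin R] upper_sums_nonneg_if_sd_geq[OF assms(6)]
    by (intro sum_mult_nonneg_if_upper_sums_nonneg[OF fin R]) auto
  also have "\<dots> \<le> (\<Sum>x\<in>S. real (pr x) * l' x) - (\<Sum>x\<in>S. real (pr x) * l x)"
    using min_price_above_le[OF fin R] total_preorder_on_refl[OF R]
      min_price_above_eq_price[OF fin R supp] assms(4,5)
    by (intro utility_gain_le_value_gain) auto
  finally show ?thesis by simp
qed

lemma price_value_less_if_sd_gt:
  assumes fin: "finite S" and R: "total_preorder_on S (R i)" and pos: "\<forall>x\<in>S. 1 \<le> pr x"
    and supp: "price_supported S (R i) pr l"
    and "\<forall>x\<in>S. 0 \<le> l x" "\<forall>x\<in>S. 0 \<le> l' x" "sd_gt S R i l' l"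
  shows "(\<Sum>x\<in>S. real (pr x) * l x) < (\<Sum>x\<in>S. real (pr x) * l' x)"
proof -
  let ?M = "\<lambda>z. real (min_price_above S (R i) pr z)"
  obtain z where z: "z \<in> S" and gain: "0 < (\<Sum>x\<in>{x\<in>S. R i x z}. l' x - l x)"
    using assms(7) unfolding sd_gt_def by (auto simp: sum_subtractf)
  have M_ge_1: "1 \<le> ?M x" if "x \<in> S" for x
    using min_price_above_attained[OF fin R that] pos by (metis of_nat_1 of_nat_le_iff)
  have M_le: "?M x \<le> real (pr x)" if "x \<in> S" for x
    using min_price_above_le[OF fin R that total_preorder_on_refl[OF R that]] by simp
  have M_anti: "?M b \<le> ?M a" if "a \<in> S" "b \<in> S" "R i a b" for a b
    using min_price_above_antimono[OF fin R that] by simp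
  \<comment> \<open>below z the utility is capped at \<open>?M z - 1\<close>; supported objects there are cheaper anyway\<close>
  define u where "u x = (if R i x z then ?M x else min (?M x) (?M z - 1))" for x
  have "0 < (\<Sum>x\<in>S. u x * (l' x - l x))"
  proof (rule sum_mult_pos_if_upper_sum_pos[OF fin R z _ _ _ _ _ gain])
    show "\<forall>a\<in>S. \<forall>b\<in>S. R i a b \<longrightarrow> u b \<le> u a"
    proof (intro ballI impI)
      fix a b assume ab: "a \<in> S" "b \<in> S" "R i a b"
      have "R i a z" if "R i b z" using that ab z total_preorder_on_trans[OF R] by blast
      then show "u b \<le> u a" using M_anti[OF ab] M_anti[OF ab(1) z] unfolding u_def by auto
    qed
    show "\<forall>a\<in>S. \<forall>b\<in>S. R i a z \<longrightarrow> \<not> R i b z \<longrightarrow> u b + 1 \<le> u a"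
      using M_anti z unfolding u_def by force
    show "\<forall>a\<in>S. R i a z \<longrightarrow> 1 \<le> u a" "\<forall>a\<in>S. 0 \<le> u a"
      using M_ge_1 z unfolding u_def by force+
    show "\<forall>y\<in>S. 0 \<le> (\<Sum>x\<in>{x\<in>S. R i x y}. l' x - l x)"
      using upper_sums_nonneg_if_sd_geq[of S R i l' l] assms(7) unfolding sd_gt_def by simp
  qed
  also have "\<dots> \<le> (\<Sum>x\<in>S. real (pr x) * l' x) - (\<Sum>x\<in>S. real (pr x) * l x)"
  proof (rule utility_gain_le_value_gain)
    show "\<forall>x\<in>S. u x \<le> real (pr x)"
      using M_le unfolding u_def by force
    show "\<forall>x\<in>S. 0 < l x \<longrightarrow> u x = real (pr x)"
    proof (intro ballI impI)
      fix x assume x: "x \<in> S" "0 < l x"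
      have "?M x = real (pr x)" using min_price_above_eq_price[OF fin R supp x] by simp
      moreover have "real (pr x) \<le> ?M z - 1" if "\<not> R i x z"
        using price_less_min_price_above[OF fin R supp x z that] by linarith
      ultimately show "u x = real (pr x)" unfolding u_def by auto
    qed
  qed (use assms(5,6) in auto)
  finally show ?thesis by simp
qed

lemma not_sd_dominated_if_price_supported:
  fixes p p' :: "'i \<Rightarrow> 'o \<Rightarrow> real" and q :: "'o \<Rightarrow> real" and pr :: "'o \<Rightarrow> nat"
  assumes fin: "finite I" "finite Os" and R: "\<forall>i\<in>I. total_preorder_on Os (R i)"
    and pos: "\<forall>x\<in>Os. 1 \<le> pr x" and supp: "\<forall>i\<in>I. price_supported Os (R i) pr (p i)"
    and p: "\<forall>i\<in>I. \<forall>x\<in>Os. 0 \<le> p i x" "\<forall>x\<in>Os. (\<Sum>i\<in>I. p i x) = q x"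
    and p': "\<forall>i\<in>I. \<forall>x\<in>Os. 0 \<le> p' i x" "\<forall>x\<in>Os. (\<Sum>i\<in>I. p' i x) \<le> q x"
  shows "\<not> sd_dominates I Os R p' p"
proof
  assume "sd_dominates I Os R p' p"
  then have geq: "\<forall>i\<in>I. sd_geq Os R i (p' i) (p i)" and gt: "\<exists>j\<in>I. sd_gt Os R j (p' j) (p j)"
    unfolding sd_dominates_def by blast+
  let ?value = "\<lambda>l. \<Sum>x\<in>Os. real (pr x) * l x"
  have "(\<Sum>i\<in>I. ?value (p i)) < (\<Sum>i\<in>I. ?value (p' i))"
  proof (rule sum_strict_mono_ex1[OF fin(1)])
    show "\<forall>i\<in>I. ?value (p i) \<le> ?value (p' i)"
    proof
      fix i assume "i \<in> I"
      then show "?value (p i) \<le> ?value (p' i)"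
        using R supp p(1) p'(1) geq by (intro price_value_le_if_sd_geq[OF fin(2)]) auto
    qed
    obtain j where "j \<in> I" "sd_gt Os R j (p' j) (p j)" using gt ..
    then show "\<exists>i\<in>I. ?value (p i) < ?value (p' i)"
      using R supp p(1) p'(1)
      by (intro bexI[of _ j] price_value_less_if_sd_gt[OF fin(2) _ pos]) auto
  qed
  also have "\<dots> = (\<Sum>x\<in>Os. real (pr x) * (\<Sum>i\<in>I. p' i x))"
    by (simp add: sum.swap[of _ I] sum_distrib_left)
  also have "\<dots> \<le> (\<Sum>x\<in>Os. real (pr x) * q x)"
    using p'(2) by (intro sum_mono mult_left_mono) auto
  also have "\<dots> = (\<Sum>x\<in>Os. real (pr x) * (\<Sum>i\<in>I. p i x))"
    using p(2) by simp
  also have "\<dots> = (\<Sum>i\<in>I. ?value (p i))"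
    by (simp add: sum.swap[of _ I] sum_distrib_left)
  finally show False by simp
qed

section \<open>Labelling\<close>

definition labLc :: "'i set \<Rightarrow> 'o set \<Rightarrow> ('i \<Rightarrow> 'o \<Rightarrow> 'o \<Rightarrow> bool) \<Rightarrow> ('i \<Rightarrow> 'o \<Rightarrow> real)
    \<Rightarrow> 'o set \<Rightarrow> nat \<Rightarrow> 'i set" where
  "labLc I Os R p Od k = snd (snd (snd (lab I Os R p Od k)))"

context
  fixes I :: "'i set" and Os :: "'o set" and R :: "'i \<Rightarrow> 'o \<Rightarrow> 'o \<Rightarrow> bool"
    and p :: "'i \<Rightarrow> 'o \<Rightarrow> real" and Od :: "'o set"
begin

lemma labT_0 [simp]: "labT I Os R p Od 0 = Od"
  and labU_0 [simp]: "labU I Os R p Od 0 = Od"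
  and labLc_0 [simp]: "labLc I Os R p Od 0 = {}"
  by (simp_all add: labT_def labU_def labLc_def)

lemma labL_Suc: "labL I Os R p Od (Suc k) = {i\<in>I. i \<notin> labLc I Os R p Od k \<and>
      lab_objs R Os p i (labT I Os R p Od k) (labU I Os R p Od k) \<noteq> {}}"
  and labT_Suc: "labT I Os R p Od (Suc k) = (\<Union>i\<in>labL I Os R p Od (Suc k).
      lab_objs R Os p i (labT I Os R p Od k) (labU I Os R p Od k))"
  and labU_Suc: "labU I Os R p Od (Suc k) = labU I Os R p Od k \<union> labT I Os R p Od (Suc k)"
  and labLc_Suc: "labLc I Os R p Od (Suc k) = labLc I Os R p Od k \<union> labL I Os R p Od (Suc k)"
  by (simp_all add: labL_def labLc_def labT_def labU_def Let_def split: prod.split)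

lemma labT_subset_labU: "labT I Os R p Od k \<subseteq> labU I Os R p Od k"
  by (cases k) (auto simp: labU_Suc)

lemma labU_mono: "k \<le> k' \<Longrightarrow> labU I Os R p Od k \<subseteq> labU I Os R p Od k'"
  by (induction k' rule: dec_induct) (auto simp: labU_Suc)

lemma labT_Suc_subset: "labT I Os R p Od (Suc k) \<subseteq> Os - labU I Os R p Od k"
  by (auto simp: labT_Suc lab_objs_def)

lemma Obar_eq_UN_labT: "Obar I Os R p Od = (\<Union>k. labT I Os R p Od k)"
  unfolding Obar_def Otil_def
proof (intro equalityI subsetI)
  fix x assume "x \<in> Od \<union> (\<Union>k. labT I Os R p Od (Suc k))"
  then show "x \<in> (\<Union>k. labT I Os R p Od k)"
  proof
    assume "x \<in> Od"
    then show ?thesis by (intro UN_I[of 0]) auto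
  qed auto
next
  fix x assume "x \<in> (\<Union>k. labT I Os R p Od k)"
  then obtain k where "x \<in> labT I Os R p Od k" by blast
  then show "x \<in> Od \<union> (\<Union>k. labT I Os R p Od (Suc k))" by (cases k) auto
qed

lemma labT_subset_Obar: "labT I Os R p Od k \<subseteq> Obar I Os R p Od"
  unfolding Obar_eq_UN_labT by blast

lemma labU_subset_Obar: "labU I Os R p Od k \<subseteq> Obar I Os R p Od"
  by (induction k) (simp_all add: labU_Suc labT_subset_Obar, simp add: Obar_def)

lemma Otil_Int_Od: "Otil I Os R p Od \<inter> Od = {}"
  using labT_Suc_subset labU_mono[of 0] by (fastforce simp: Otil_def)

lemma Otil_subset: "Otil I Os R p Od \<subseteq> Os"
  using labT_Suc_subset by (fastforce simp: Otil_def)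

lemma Otil_i_subset_Otil: "Otil_i I Os R p Od i \<subseteq> Otil I Os R p Od"
  by (auto simp: Otil_i_def Otil_def labT_Suc split: if_splits)

lemma labLc_obtain: "i \<in> labLc I Os R p Od k \<Longrightarrow> \<exists>j<k. i \<in> labL I Os R p Od (Suc j)"
  by (induction k) (auto simp: labLc_Suc less_Suc_eq)

lemma active_subset: "active I Os R \<omega> p Od \<subseteq> I"
  by (auto simp: active_def Lset_def labL_Suc)

lemma held_indiff_in_labU_Suc:
  assumes "i \<in> I" "i \<notin> labLc I Os R p Od k" "z \<in> labT I Os R p Od k"
    and "s \<in> Os" "0 < p i s" "indiff R i z s"
  shows "s \<in> labU I Os R p Od (Suc k)"
proof (cases "s \<in> labU I Os R p Od k")
  case False
  with assms have "s \<in> lab_objs R Os p i (labT I Os R p Od k) (labU I Os R p Od k)"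
    by (auto simp: lab_objs_def)
  with assms show ?thesis by (auto simp: labU_Suc labT_Suc labL_Suc)
qed (simp add: labU_Suc)

text \<open>If i is not yet labelled at the level of a, then s is labelled at the next level; otherwise
  the object through which i was labelled is indifferent to s and labels it.\<close>
lemma Obar_closed_under_held_indiff:
  assumes R: "total_preorder_on Os (R i)" and "Od \<subseteq> Os" and i: "i \<in> I"
    and a: "a \<in> Obar I Os R p Od" and s: "s \<in> Os" "0 < p i s" "indiff R i a s"
    and top: "\<forall>x\<in>Os. 0 < p i x \<longrightarrow> (\<forall>b\<in>Obar I Os R p Od. R i x b)"
  shows "s \<in> Obar I Os R p Od"
proof -
  have Obar_Os: "Obar I Os R p Od \<subseteq> Os"
    using \<open>Od \<subseteq> Os\<close> Otil_subset by (auto simp: Obar_def)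
  obtain k where k: "a \<in> labT I Os R p Od k" using a by (auto simp: Obar_eq_UN_labT)
  show ?thesis
  proof (cases "i \<in> labLc I Os R p Od k")
    case False
    have "s \<in> labU I Os R p Od (Suc k)" by (rule held_indiff_in_labU_Suc[OF i False k s])
    then show ?thesis using labU_subset_Obar by blast
  next
    case True
    then obtain j where "i \<in> labL I Os R p Od (Suc j)" using labLc_obtain by blast
    then have j: "i \<notin> labLc I Os R p Od j"
      and "lab_objs R Os p i (labT I Os R p Od j) (labU I Os R p Od j) \<noteq> {}"
      by (auto simp: labL_Suc)
    then obtain z w where z: "z \<in> labT I Os R p Od j" "indiff R i z w" and w: "w \<in> Os" "0 < p i w"
      by (auto simp: lab_objs_def)
    have zO: "z \<in> Obar I Os R p Od" using z(1) labT_subset_Obar by blast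
    have "R i z s"
    proof -
      have "R i z w" "R i a s" using z(2) s(3) by (simp_all add: indiff_def)
      moreover have "R i w a" using top w a by blast
      ultimately show ?thesis
        using total_preorder_on_trans[OF R] w s(1) a zO Obar_Os by (meson subsetD)
    qed
    moreover have "R i s z" using top s zO by blast
    ultimately have "indiff R i z s" by (simp add: indiff_def)
    then have "s \<in> labU I Os R p Od (Suc j)" by (rule held_indiff_in_labU_Suc[OF i j z(1) s(1,2)])
    then show ?thesis using labU_subset_Obar by blast
  qed
qed

end

section \<open>One trading step\<close>

lemma Aset_top:
  "x \<in> Aset I Os R p Od i \<Longrightarrow> x \<in> Obar I Os R p Od \<and> (\<forall>b\<in>Obar I Os R p Od. R i x b)"
  unfolding Aset_def Bset_def by blast

text \<open>A single step, with the FTTC conditions it actually needs: the quota matrix enters only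
  through \<open>lam i ob * xo ob \<le> \<beta> i ob \<le> \<omega> i ob\<close>.\<close>

locale fttc_trade =
  fixes I :: "'i set" and Os :: "'o set" and R :: "'i \<Rightarrow> 'o \<Rightarrow> 'o \<Rightarrow> bool"
    and \<omega> p \<omega>' p' :: "'i \<Rightarrow> 'o \<Rightarrow> real" and Od Od' :: "'o set"
    and lam \<gamma> :: "'i \<Rightarrow> 'o \<Rightarrow> real" and xi :: "'i \<Rightarrow> real" and xo :: "'o \<Rightarrow> real"
  assumes finite_I: "finite I" and finite_Os: "finite Os"
    and pref: "\<forall>i\<in>I. total_preorder_on Os (R i)"
    and Od_subset: "Od \<subseteq> Os"
    and nonneg: "\<forall>i\<in>I. \<forall>ob\<in>Os. 0 \<le> \<omega> i ob \<and> 0 \<le> p i ob"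
    and omega_outside: "\<forall>i\<in>I. \<forall>ob\<in>Os - Od. \<omega> i ob = 0"
    and assigned_top: "\<forall>i\<in>I. \<forall>x\<in>Os. 0 < p i x \<longrightarrow> (\<forall>b\<in>Obar I Os R p Od. R i x b)"
    and lam_nonneg: "\<forall>i\<in>active I Os R \<omega> p Od. \<forall>ob\<in>Obar I Os R p Od. 0 \<le> lam i ob"
    and lam_sum: "\<forall>ob\<in>Obar I Os R p Od. (\<Sum>i\<in>active I Os R \<omega> p Od. lam i ob) = 1"
    and lam_Otil: "\<forall>i\<in>active I Os R \<omega> p Od. \<forall>ob\<in>Otil I Os R p Od.
                     0 < lam i ob \<longrightarrow> ob \<in> Otil_i I Os R p Od i"
    and sold_endowment: "\<forall>i\<in>active I Os R \<omega> p Od. \<forall>ob\<in>Od. lam i ob * xo ob \<le> \<omega> i ob"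
    and sold_assigned: "\<forall>i\<in>active I Os R \<omega> p Od. \<forall>ob\<in>Otil I Os R p Od. lam i ob * xo ob \<le> p i ob"
    and gam_nonneg: "\<forall>i\<in>active I Os R \<omega> p Od. \<forall>ob\<in>Obar I Os R p Od. 0 \<le> \<gamma> i ob"
    and gam_sum: "\<forall>i\<in>active I Os R \<omega> p Od. (\<Sum>ob\<in>Obar I Os R p Od. \<gamma> i ob) = 1"
    and gam_Aset: "\<forall>i\<in>active I Os R \<omega> p Od. \<forall>ob\<in>Obar I Os R p Od.
                     0 < \<gamma> i ob \<longrightarrow> ob \<in> Aset I Os R p Od i"
    and xi_nonneg: "\<forall>i\<in>active I Os R \<omega> p Od. 0 \<le> xi i"
    and xo_nonneg: "\<forall>ob\<in>Obar I Os R p Od. 0 \<le> xo ob"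
    and xo_eq: "\<forall>ob\<in>Obar I Os R p Od. xo ob = (\<Sum>i\<in>active I Os R \<omega> p Od. \<gamma> i ob * xi i)"
    and xi_eq: "\<forall>i\<in>active I Os R \<omega> p Od. xi i = (\<Sum>ob\<in>Obar I Os R p Od. lam i ob * xo ob)"
    and omega'_eq: "\<And>i ob. \<omega>' i ob = (if i \<in> active I Os R \<omega> p Od
        then (if ob \<in> Od then \<omega> i ob - lam i ob * xo ob else 0) else \<omega> i ob)"
    and p'_eq: "\<And>i ob. p' i ob = (if i \<in> active I Os R \<omega> p Od
        then p i ob - (if ob \<in> Otil_i I Os R p Od i then lam i ob * xo ob else 0)
               + (if ob \<in> Obar I Os R p Od then \<gamma> i ob * xi i else 0)
        else p i ob)"
    and Od'_eq: "Od' = {ob\<in>Od. 0 < (\<Sum>i\<in>I. \<omega>' i ob)}"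
begin

abbreviation "Ia \<equiv> active I Os R \<omega> p Od"
abbreviation "Ob \<equiv> Obar I Os R p Od"
abbreviation "Ot \<equiv> Otil I Os R p Od"
abbreviation "Oti \<equiv> Otil_i I Os R p Od"

definition outflow :: "'i \<Rightarrow> 'o \<Rightarrow> real" where
  "outflow i ob = (if ob \<in> Od \<union> Oti i then lam i ob * xo ob else 0)"

definition inflow :: "'i \<Rightarrow> 'o \<Rightarrow> real" where
  "inflow i ob = (if ob \<in> Ob then \<gamma> i ob * xi i else 0)"

lemma Ia_subset: "Ia \<subseteq> I"
  by (rule active_subset)

lemma Ob_eq: "Ob = Od \<union> Ot"
  by (simp add: Obar_def)

lemma Ob_subset: "Ob \<subseteq> Os"
  using Od_subset Otil_subset[of I Os R p Od] by (auto simp: Ob_eq)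

lemma Oti_subset: "Oti i \<subseteq> Ot"
  by (rule Otil_i_subset_Otil)

lemma lam_eq_0: "i \<in> Ia \<Longrightarrow> ob \<in> Ot \<Longrightarrow> ob \<notin> Oti i \<Longrightarrow> lam i ob = 0"
  using lam_Otil lam_nonneg Ob_eq by force

lemma outflow_nonneg: "i \<in> Ia \<Longrightarrow> 0 \<le> outflow i ob"
  using lam_nonneg xo_nonneg Oti_subset[of i] unfolding outflow_def Ob_eq by auto

lemma inflow_nonneg: "i \<in> Ia \<Longrightarrow> 0 \<le> inflow i ob"
  using gam_nonneg xi_nonneg by (auto simp: inflow_def)

lemma holding_update:
  assumes "i \<in> I" "ob \<in> Os"
  shows "p' i ob + \<omega>' i ob = p i ob + \<omega> i ob + (if i \<in> Ia then inflow i ob - outflow i ob else 0)"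
proof -
  have "Od \<inter> Oti i = {}" using Otil_Int_Od[of I Os R p Od] Oti_subset[of i] by blast
  then show ?thesis
    using assms omega_outside by (auto simp: omega'_eq p'_eq inflow_def outflow_def)
qed

lemma sum_outflow_eq_sum_inflow:
  assumes "ob \<in> Os"
  shows "(\<Sum>i\<in>Ia. outflow i ob) = (\<Sum>i\<in>Ia. inflow i ob)"
proof (cases "ob \<in> Ob")
  case True
  have "(\<Sum>i\<in>Ia. outflow i ob) = (\<Sum>i\<in>Ia. lam i ob * xo ob)"
  proof (rule sum.cong)
    fix i assume "i \<in> Ia"
    then show "outflow i ob = lam i ob * xo ob"
      using True lam_eq_0[of i ob] by (auto simp: outflow_def Ob_eq)
  qed simp
  also have "\<dots> = xo ob" using lam_sum True by (simp add: sum_distrib_right[symmetric])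
  also have "\<dots> = (\<Sum>i\<in>Ia. inflow i ob)" using xo_eq True by (simp add: inflow_def)
  finally show ?thesis .
next
  case False
  then have "ob \<notin> Od \<union> Oti i" for i using Oti_subset[of i] by (auto simp: Ob_eq)
  with False show ?thesis by (simp add: outflow_def inflow_def)
qed

lemma sum_outflow_agent:
  assumes "i \<in> Ia"
  shows "(\<Sum>ob\<in>Os. outflow i ob) = xi i"
proof -
  have "(\<Sum>ob\<in>Os. outflow i ob) = (\<Sum>ob\<in>Ob. lam i ob * xo ob)"
  proof (rule sum.mono_neutral_cong_right[OF finite_Os Ob_subset])
    show "\<forall>ob\<in>Os - Ob. outflow i ob = 0"
      using Oti_subset[of i] by (auto simp: outflow_def Ob_eq)
    show "outflow i ob = lam i ob * xo ob" if "ob \<in> Ob" for ob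
      using that assms lam_eq_0[of i ob] by (auto simp: outflow_def Ob_eq)
  qed
  also have "\<dots> = xi i" using xi_eq assms by simp
  finally show ?thesis .
qed

lemma sum_inflow_agent:
  assumes "i \<in> Ia"
  shows "(\<Sum>ob\<in>Os. inflow i ob) = xi i"
proof -
  have "(\<Sum>ob\<in>Os. inflow i ob) = (\<Sum>ob\<in>Ob. \<gamma> i ob * xi i)"
    by (rule sum.mono_neutral_cong_right[OF finite_Os Ob_subset]) (auto simp: inflow_def)
  also have "\<dots> = xi i" using gam_sum assms by (simp add: sum_distrib_right[symmetric])
  finally show ?thesis .
qed

lemma holdings_column_conserved:
  assumes "ob \<in> Os"
  shows "(\<Sum>i\<in>I. p' i ob + \<omega>' i ob) = (\<Sum>i\<in>I. p i ob + \<omega> i ob)"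
proof -
  have "(\<Sum>i\<in>I. p' i ob + \<omega>' i ob)
      = (\<Sum>i\<in>I. (p i ob + \<omega> i ob) + (if i \<in> Ia then inflow i ob - outflow i ob else 0))"
    using holding_update assms by (intro sum.cong) auto
  also have "\<dots> = (\<Sum>i\<in>I. p i ob + \<omega> i ob)
      + (\<Sum>i\<in>I. if i \<in> Ia then inflow i ob - outflow i ob else 0)"
    by (rule sum.distrib)
  also have "(\<Sum>i\<in>I. if i \<in> Ia then inflow i ob - outflow i ob else 0)
      = (\<Sum>i\<in>Ia. inflow i ob - outflow i ob)"
    by (rule sum.mono_neutral_cong_right[OF finite_I Ia_subset]) auto
  also have "(\<Sum>i\<in>Ia. inflow i ob - outflow i ob) = 0"
    using sum_outflow_eq_sum_inflow assms by (simp add: sum_subtractf)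
  finally show ?thesis by simp
qed

lemma holdings_row_conserved:
  assumes "i \<in> I"
  shows "(\<Sum>ob\<in>Os. p' i ob + \<omega>' i ob) = (\<Sum>ob\<in>Os. p i ob + \<omega> i ob)"
proof (cases "i \<in> Ia")
  case True
  then have "(\<Sum>ob\<in>Os. p' i ob + \<omega>' i ob)
      = (\<Sum>ob\<in>Os. p i ob + \<omega> i ob) + (sum (inflow i) Os - sum (outflow i) Os)"
    using holding_update assms by (simp add: sum.distrib sum_subtractf)
  then show ?thesis using sum_outflow_agent sum_inflow_agent True by simp
next
  case False
  then show ?thesis using holding_update[OF assms] by (intro sum.cong) auto
qed

lemma inflow_pos_top:
  assumes "i \<in> Ia" "0 < inflow i x"
  shows "x \<in> Ob \<and> (\<forall>b\<in>Ob. R i x b)"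
proof -
  have "x \<in> Ob" "0 < \<gamma> i x * xi i" using assms(2) by (auto simp: inflow_def split: if_splits)
  moreover have "0 \<le> xi i" using xi_nonneg assms(1) by blast
  ultimately have "0 < \<gamma> i x" by (simp add: zero_less_mult_iff)
  then have "x \<in> Aset I Os R p Od i" using gam_Aset assms(1) \<open>x \<in> Ob\<close> by blast
  then show ?thesis by (rule Aset_top)
qed

lemma holdings_sd_step:
  assumes "i \<in> I"
  shows "sd_geq Os R i (\<lambda>ob. p' i ob + \<omega>' i ob) (\<lambda>ob. p i ob + \<omega> i ob)"
  unfolding sd_geq_def
proof
  fix z assume z: "z \<in> Os"
  let ?U = "{x\<in>Os. R i x z}"
  show "(\<Sum>x\<in>?U. p i x + \<omega> i x) \<le> (\<Sum>x\<in>?U. p' i x + \<omega>' i x)"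
  proof (cases "i \<in> Ia")
    case True
    have "(\<Sum>x\<in>?U. outflow i x) \<le> (\<Sum>x\<in>?U. inflow i x)"
    proof (rule upper_sum_le_if_mass_moved_to_top[OF finite_Os _ z])
      show "total_preorder_on Os (R i)" using pref assms by blast
      show "\<forall>x\<in>Os. 0 \<le> outflow i x" "\<forall>x\<in>Os. 0 \<le> inflow i x"
        using outflow_nonneg[OF True] inflow_nonneg[OF True] by simp_all
      show "\<forall>x\<in>Os - Ob. outflow i x = 0"
        using Oti_subset[of i] by (auto simp: outflow_def Ob_eq)
      show "\<forall>x\<in>Os. 0 < inflow i x \<longrightarrow> x \<in> Ob \<and> (\<forall>b\<in>Ob. R i x b)"
        using inflow_pos_top[OF True] by simp
      show "sum (outflow i) Os \<le> sum (inflow i) Os"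
        using sum_outflow_agent sum_inflow_agent True by simp
    qed
    moreover have "(\<Sum>x\<in>?U. p' i x + \<omega>' i x)
        = (\<Sum>x\<in>?U. p i x + \<omega> i x) + (\<Sum>x\<in>?U. inflow i x) - (\<Sum>x\<in>?U. outflow i x)"
      using holding_update[OF assms] True by (simp add: sum.distrib sum_subtractf)
    ultimately show ?thesis by simp
  next
    case False
    then show ?thesis using holding_update[OF assms] by simp
  qed
qed

lemma omega'_nonneg: "i \<in> I \<Longrightarrow> ob \<in> Os \<Longrightarrow> 0 \<le> \<omega>' i ob"
  using sold_endowment nonneg by (auto simp: omega'_eq)

lemma p'_nonneg:
  assumes "i \<in> I" "ob \<in> Os"
  shows "0 \<le> p' i ob"
proof (cases "i \<in> Ia")
  case True
  then have "(if ob \<in> Oti i then lam i ob * xo ob else 0) \<le> p i ob"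
    using sold_assigned Oti_subset[of i] nonneg assms by auto
  moreover have "0 \<le> (if ob \<in> Ob then \<gamma> i ob * xi i else 0)"
    using gam_nonneg xi_nonneg True by auto
  ultimately show ?thesis using True by (simp add: p'_eq)
next
  case False
  then show ?thesis using nonneg assms by (simp add: p'_eq)
qed

lemma Od'_subset: "Od' \<subseteq> Od"
  by (simp add: Od'_eq)

lemma omega'_outside:
  assumes "i \<in> I" "ob \<in> Os - Od'"
  shows "\<omega>' i ob = 0"
proof (cases "ob \<in> Od")
  case True
  then have "(\<Sum>j\<in>I. \<omega>' j ob) \<le> 0" using assms(2) by (simp add: Od'_eq)
  moreover have nonneg': "\<forall>j\<in>I. 0 \<le> \<omega>' j ob" using omega'_nonneg assms(2) by simp
  ultimately have "(\<Sum>j\<in>I. \<omega>' j ob) = 0" by (simp add: antisym sum_nonneg)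
  then have "\<forall>j\<in>I. \<omega>' j ob = 0"
    using sum_nonneg_eq_0_iff[OF finite_I, of "\<lambda>j. \<omega>' j ob"] nonneg' by simp
  then show ?thesis using assms(1) by simp
next
  case False
  then show ?thesis using assms omega_outside by (simp add: omega'_eq)
qed

lemma p'_outside_Ob: "ob \<notin> Ob \<Longrightarrow> p' i ob = p i ob"
  using Oti_subset[of i] by (auto simp: p'_eq Ob_eq)

lemma acquired_top:
  assumes "0 < p' i x" "p i x \<le> 0"
  shows "x \<in> Ob \<and> (\<forall>b\<in>Ob. R i x b)"
proof -
  have "i \<in> Ia" using assms by (auto simp: p'_eq split: if_splits)
  have "x \<in> Ob" using assms p'_outside_Ob by force
  have "0 \<le> (if x \<in> Oti i then lam i x * xo x else 0)"
    using lam_nonneg xo_nonneg \<open>i \<in> Ia\<close> \<open>x \<in> Ob\<close> by auto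
  then have "0 < inflow i x"
    using assms \<open>i \<in> Ia\<close> by (auto simp: p'_eq inflow_def)
  then show ?thesis by (rule inflow_pos_top[OF \<open>i \<in> Ia\<close>])
qed

lemma Obar'_subset: "Obar I Os R p' Od' \<subseteq> Ob"
proof -
  have "labU I Os R p' Od' k \<subseteq> Ob" for k
  proof (induction k)
    case 0
    show ?case using Od'_subset by (auto simp: Ob_eq)
  next
    case (Suc k)
    have "s \<in> Ob" if s_lab: "s \<in> labT I Os R p' Od' (Suc k)" for s
    proof -
      obtain i where i: "i \<in> labL I Os R p' Od' (Suc k)"
        and "s \<in> lab_objs R Os p' i (labT I Os R p' Od' k) (labU I Os R p' Od' k)"
        using s_lab by (auto simp: labT_Suc)
      then obtain a where a: "a \<in> labT I Os R p' Od' k" "indiff R i a s"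
        and s: "s \<in> Os" "0 < p' i s"
        by (auto simp: lab_objs_def)
      have "i \<in> I" using i by (simp add: labL_Suc)
      have "a \<in> Ob" using Suc.IH a(1) labT_subset_labU[of I Os R p' Od' k] by blast
      show "s \<in> Ob"
      proof (rule ccontr)
        assume "s \<notin> Ob"
        then have "0 < p i s" using s p'_outside_Ob by simp
        then have "s \<in> Ob"
          using Obar_closed_under_held_indiff[OF _ Od_subset \<open>i \<in> I\<close> \<open>a \<in> Ob\<close> s(1) _ a(2)]
            pref assigned_top \<open>i \<in> I\<close> by blast
        with \<open>s \<notin> Ob\<close> show False ..
      qed
    qed
    then show ?case using Suc.IH by (auto simp: labU_Suc)
  qed
  then show ?thesis using labT_subset_labU by (force simp: Obar_eq_UN_labT)
qed

lemma assigned_top':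
  assumes "i \<in> I" "x \<in> Os" "0 < p' i x" "b \<in> Obar I Os R p' Od'"
  shows "R i x b"
proof -
  have "b \<in> Ob" using assms(4) Obar'_subset by blast
  then show ?thesis
    using assigned_top assms acquired_top[OF assms(3)] by (cases "0 < p i x") auto
qed

end

section \<open>Runs of FTTC\<close>

definition fttc_invariant ::
  "'i set \<Rightarrow> 'o set \<Rightarrow> ('i \<Rightarrow> 'o \<Rightarrow> 'o \<Rightarrow> bool) \<Rightarrow> ('i \<Rightarrow> 'o \<Rightarrow> real)
   \<Rightarrow> ('i \<Rightarrow> 'o \<Rightarrow> real) \<Rightarrow> ('i \<Rightarrow> 'o \<Rightarrow> real) \<Rightarrow> 'o set \<Rightarrow> bool" where
  "fttc_invariant I Os R \<omega>0 \<omega> p Od \<longleftrightarrow>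
     Od \<subseteq> Os \<and> (\<forall>i\<in>I. \<forall>ob\<in>Os. 0 \<le> \<omega> i ob \<and> 0 \<le> p i ob) \<and>
     (\<forall>i\<in>I. \<forall>ob\<in>Os - Od. \<omega> i ob = 0) \<and>
     (\<forall>i\<in>I. \<forall>x\<in>Os. 0 < p i x \<longrightarrow> (\<forall>b\<in>Obar I Os R p Od. R i x b)) \<and>
     (\<forall>ob\<in>Os. (\<Sum>i\<in>I. p i ob + \<omega> i ob) = quota I \<omega>0 ob) \<and>
     (\<forall>i\<in>I. (\<Sum>ob\<in>Os. p i ob + \<omega> i ob) = (\<Sum>ob\<in>Os. \<omega>0 i ob)) \<and>
     (\<forall>i\<in>I. sd_geq Os R i (\<lambda>ob. p i ob + \<omega> i ob) (\<omega>0 i))"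

lemma fttc_step_imp_trade:
  assumes fee: "fee_problem I Os R \<omega>0" and inv: "fttc_invariant I Os R \<omega>0 \<omega> p Od"
    and step: "fttc_step I Os R (\<omega>, p, Od) (\<omega>', p', Od')"
  shows "\<exists>lam \<gamma> xi xo. fttc_trade I Os R \<omega> p \<omega>' p' Od Od' lam \<gamma> xi xo"
proof -
  let ?Ia = "active I Os R \<omega> p Od" and ?Ob = "Obar I Os R p Od" and ?Ot = "Otil I Os R p Od"
  obtain lam \<beta> \<gamma> xi xo where
      lam: "\<forall>i\<in>?Ia. \<forall>ob\<in>?Ob. 0 \<le> lam i ob" "\<forall>ob\<in>?Ob. (\<Sum>i\<in>?Ia. lam i ob) = 1"
        "\<forall>i\<in>?Ia. \<forall>ob\<in>?Ot. 0 < lam i ob \<longrightarrow> ob \<in> Otil_i I Os R p Od i"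
    and \<beta>: "\<forall>i\<in>?Ia. \<forall>ob\<in>Od. 0 \<le> \<beta> i ob \<and> \<beta> i ob \<le> \<omega> i ob"
    and \<gamma>: "\<forall>i\<in>?Ia. \<forall>ob\<in>?Ob. 0 \<le> \<gamma> i ob" "\<forall>i\<in>?Ia. (\<Sum>ob\<in>?Ob. \<gamma> i ob) = 1"
        "\<forall>i\<in>?Ia. \<forall>ob\<in>?Ob. 0 < \<gamma> i ob \<longrightarrow> ob \<in> Aset I Os R p Od i"
    and x: "trade_feasible I Os R \<omega> p Od lam \<beta> \<gamma> xi xo"
    and upd: "\<forall>i ob. \<omega>' i ob = (if i \<in> ?Ia then (if ob \<in> Od then \<omega> i ob - lam i ob * xo ob else 0)
                          else \<omega> i ob)"
        "\<forall>i ob. p' i ob = (if i \<in> ?Ia then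
                           p i ob - (if ob \<in> Otil_i I Os R p Od i then lam i ob * xo ob else 0)
                                 + (if ob \<in> ?Ob then \<gamma> i ob * xi i else 0)
                          else p i ob)"
        "Od' = {ob\<in>Od. 0 < (\<Sum>i\<in>I. \<omega>' i ob)}"
    using step unfolding fttc_step_def Let_def prod.case by blast
  have feasible: "\<forall>i\<in>?Ia. 0 \<le> xi i" "\<forall>ob\<in>?Ob. 0 \<le> xo ob"
      "\<forall>ob\<in>?Ob. xo ob = (\<Sum>i\<in>?Ia. \<gamma> i ob * xi i)"
      "\<forall>i\<in>?Ia. xi i = (\<Sum>ob\<in>?Ob. lam i ob * xo ob)"
      "\<forall>i\<in>?Ia. \<forall>ob\<in>Od. lam i ob * xo ob \<le> \<beta> i ob"
      "\<forall>i\<in>?Ia. \<forall>ob\<in>?Ot. lam i ob * xo ob \<le> p i ob"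
    using x unfolding trade_feasible_def Let_def by blast+
  have sold: "\<forall>i\<in>?Ia. \<forall>ob\<in>Od. lam i ob * xo ob \<le> \<omega> i ob"
    using feasible(5) \<beta> by force
  have "finite I" "finite Os" using fee by (simp_all add: fee_problem_def)
  moreover have "\<forall>i\<in>I. total_preorder_on Os (R i)"
    using fee_problem_total_preorder_on[OF fee] by blast
  moreover have "Od \<subseteq> Os" "\<forall>i\<in>I. \<forall>ob\<in>Os. 0 \<le> \<omega> i ob \<and> 0 \<le> p i ob"
      "\<forall>i\<in>I. \<forall>ob\<in>Os - Od. \<omega> i ob = 0"
      "\<forall>i\<in>I. \<forall>x\<in>Os. 0 < p i x \<longrightarrow> (\<forall>b\<in>?Ob. R i x b)"
    using inv unfolding fttc_invariant_def by simp_all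
  ultimately have "fttc_trade I Os R \<omega> p \<omega>' p' Od Od' lam \<gamma> xi xo"
    using lam \<gamma> feasible sold upd by unfold_locales (assumption | rule upd[rule_format])+
  then show ?thesis by blast
qed

lemma fttc_invariant_step:
  assumes "fee_problem I Os R \<omega>0" and inv: "fttc_invariant I Os R \<omega>0 \<omega> p Od"
    and "fttc_step I Os R (\<omega>, p, Od) (\<omega>', p', Od')"
  shows "fttc_invariant I Os R \<omega>0 \<omega>' p' Od'"
proof -
  obtain lam \<gamma> xi xo where "fttc_trade I Os R \<omega> p \<omega>' p' Od Od' lam \<gamma> xi xo"
    using fttc_step_imp_trade[OF assms] by blast
  then interpret fttc_trade I Os R \<omega> p \<omega>' p' Od Od' lam \<gamma> xi xo .
  show ?thesis
    unfolding fttc_invariant_def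
  proof (intro conjI ballI impI)
    show "Od' \<subseteq> Os" using Od'_subset Od_subset by blast
    show "\<And>i ob. i \<in> I \<Longrightarrow> ob \<in> Os \<Longrightarrow> 0 \<le> \<omega>' i ob"
      and "\<And>i ob. i \<in> I \<Longrightarrow> ob \<in> Os \<Longrightarrow> 0 \<le> p' i ob"
      and "\<And>i ob. i \<in> I \<Longrightarrow> ob \<in> Os - Od' \<Longrightarrow> \<omega>' i ob = 0"
      and "\<And>i x b. i \<in> I \<Longrightarrow> x \<in> Os \<Longrightarrow> 0 < p' i x \<Longrightarrow> b \<in> Obar I Os R p' Od' \<Longrightarrow> R i x b"
      by (fact omega'_nonneg p'_nonneg omega'_outside assigned_top')+
    show "(\<Sum>i\<in>I. p' i ob + \<omega>' i ob) = quota I \<omega>0 ob" if "ob \<in> Os" for ob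
      using holdings_column_conserved[OF that] inv that by (simp add: fttc_invariant_def)
    show "(\<Sum>ob\<in>Os. p' i ob + \<omega>' i ob) = (\<Sum>ob\<in>Os. \<omega>0 i ob)" if "i \<in> I" for i
      using holdings_row_conserved[OF that] inv that by (simp add: fttc_invariant_def)
    show "sd_geq Os R i (\<lambda>ob. p' i ob + \<omega>' i ob) (\<omega>0 i)" if "i \<in> I" for i
      using sd_geq_trans[OF holdings_sd_step[OF that]] inv that by (simp add: fttc_invariant_def)
  qed
qed

lemma fttc_step_Obar:
  assumes "fee_problem I Os R \<omega>0" "fttc_invariant I Os R \<omega>0 \<omega> p Od"
    and "fttc_step I Os R (\<omega>, p, Od) (\<omega>', p', Od')"
  shows fttc_step_Obar_subset: "Obar I Os R p' Od' \<subseteq> Obar I Os R p Od"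
    and fttc_step_acquired_top: "0 < p' i x \<Longrightarrow> p i x \<le> 0 \<Longrightarrow>
      x \<in> Obar I Os R p Od \<and> (\<forall>b\<in>Obar I Os R p Od. R i x b)"
proof -
  obtain lam \<gamma> xi xo where "fttc_trade I Os R \<omega> p \<omega>' p' Od Od' lam \<gamma> xi xo"
    using fttc_step_imp_trade[OF assms] by blast
  then interpret fttc_trade I Os R \<omega> p \<omega>' p' Od Od' lam \<gamma> xi xo .
  show "Obar I Os R p' Od' \<subseteq> Obar I Os R p Od" by (rule Obar'_subset)
  show "0 < p' i x \<Longrightarrow> p i x \<le> 0 \<Longrightarrow>
      x \<in> Obar I Os R p Od \<and> (\<forall>b\<in>Obar I Os R p Od. R i x b)"
    by (rule acquired_top)
qed

locale fttc_run =
  fixes I :: "'i set" and Os :: "'o set" and R :: "'i \<Rightarrow> 'o \<Rightarrow> 'o \<Rightarrow> bool"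
    and \<omega>0 :: "'i \<Rightarrow> 'o \<Rightarrow> real"
    and s :: "nat \<Rightarrow> ('i \<Rightarrow> 'o \<Rightarrow> real) \<times> ('i \<Rightarrow> 'o \<Rightarrow> real) \<times> 'o set" and n :: nat
  assumes fee: "fee_problem I Os R \<omega>0"
    and start: "s 0 = (\<omega>0, (\<lambda>_ _. 0), Os)"
    and steps: "\<forall>d<n. fttc_step I Os R (s d) (s (Suc d))"
begin

abbreviation "\<omega>_at d \<equiv> fst (s d)"
abbreviation "p_at d \<equiv> fst (snd (s d))"
abbreviation "O_at d \<equiv> snd (snd (s d))"
abbreviation "Obar_at d \<equiv> Obar I Os R (p_at d) (O_at d)"

lemma step_at:
  "d < n \<Longrightarrow> fttc_step I Os R (\<omega>_at d, p_at d, O_at d) (\<omega>_at (Suc d), p_at (Suc d), O_at (Suc d))"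
  using steps by simp

lemma invariant_at: "d \<le> n \<Longrightarrow> fttc_invariant I Os R \<omega>0 (\<omega>_at d) (p_at d) (O_at d)"
proof (induction d)
  case 0
  have "\<forall>i\<in>I. \<forall>ob\<in>Os. 0 \<le> \<omega>0 i ob" using fee by (simp add: fee_problem_def)
  then show ?case using start by (simp add: fttc_invariant_def quota_def sd_geq_def)
next
  case (Suc d)
  then show ?case using fttc_invariant_step[OF fee _ step_at] by simp
qed

lemma Obar_at_antimono: "d \<le> d' \<Longrightarrow> d' \<le> n \<Longrightarrow> Obar_at d' \<subseteq> Obar_at d"
proof (induction d' rule: dec_induct)
  case (step m)
  then show ?case using fttc_step_Obar_subset[OF fee invariant_at step_at, of m] by simp
qed simp

lemma acquisition_time:
  assumes "d \<le> d'" "d' \<le> n" "p_at d i x \<le> 0" "0 < p_at d' i x"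
  shows "\<exists>t. d \<le> t \<and> t < d' \<and> x \<in> Obar_at t \<and> (\<forall>b\<in>Obar_at t. R i x b)"
  using assms
proof (induction d' rule: dec_induct)
  case (step m)
  show ?case
  proof (cases "0 < p_at m i x")
    case True
    then show ?thesis using step by (auto intro: less_SucI)
  next
    case False
    then show ?thesis
      using fttc_step_acquired_top[OF fee invariant_at step_at, of m] step by force
  qed
qed simp

definition unavailable :: "'o \<Rightarrow> nat set" where
  "unavailable ob = {d. d < n \<and> ob \<notin> Obar_at d}"

definition price :: "'o \<Rightarrow> nat" where
  "price ob = 1 + card (unavailable ob)"

lemma finite_unavailable: "finite (unavailable ob)"
  by (simp add: unavailable_def)

lemma unavailable_mono:
  assumes i: "i \<in> I" and x: "x \<in> Os" "0 < p_at n i x" and ob: "ob \<in> Os" "R i ob x"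
  shows "unavailable x \<subseteq> unavailable ob"
proof
  fix d assume "d \<in> unavailable x"
  then have d: "d < n" "x \<notin> Obar_at d" by (auto simp: unavailable_def)
  \<comment> \<open>were ob available at d, so would be x: either i already holds x, which is then indifferent
    to ob, or i acquires x later, from a smaller Obar\<close>
  have "ob \<notin> Obar_at d"
  proof
    assume ob_d: "ob \<in> Obar_at d"
    have inv: "fttc_invariant I Os R \<omega>0 (\<omega>_at d) (p_at d) (O_at d)"
      using invariant_at d(1) by simp
    show False
    proof (cases "0 < p_at d i x")
      case True
      have top: "\<forall>y\<in>Os. 0 < p_at d i y \<longrightarrow> (\<forall>b\<in>Obar_at d. R i y b)"
        using inv i by (simp add: fttc_invariant_def)
      then have "indiff R i ob x" using ob ob_d x(1) True by (simp add: indiff_def)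
      moreover have "O_at d \<subseteq> Os" using inv by (simp add: fttc_invariant_def)
      ultimately have "x \<in> Obar_at d"
        using Obar_closed_under_held_indiff[OF fee_problem_total_preorder_on[OF fee i] _ i ob_d
            x(1) True _ top] by blast
      with d(2) show False ..
    next
      case False
      then obtain t where "d \<le> t" "t < n" "x \<in> Obar_at t"
        using acquisition_time[of d n i x] d(1) x(2) by auto
      then have "x \<in> Obar_at d" using Obar_at_antimono[of d t] by auto
      with d(2) show False ..
    qed
  qed
  with d(1) show "d \<in> unavailable ob" by (simp add: unavailable_def)
qed

lemma unavailable_strict_mono:
  assumes "i \<in> I" "x \<in> Os" "0 < p_at n i x" "ob \<in> Os" "R i ob x" "\<not> R i x ob"
  shows "unavailable x \<subset> unavailable ob"
proof -
  have "p_at 0 i x = 0" using start by simp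
  then obtain t where t: "t < n" "x \<in> Obar_at t" "\<forall>b\<in>Obar_at t. R i x b"
    using acquisition_time[of 0 n i x] assms(3) by auto
  then have "t \<in> unavailable ob - unavailable x"
    using assms(6) by (auto simp: unavailable_def)
  then show ?thesis using unavailable_mono[OF assms(1-5)] by blast
qed

lemma price_supported_at_end: "i \<in> I \<Longrightarrow> price_supported Os (R i) price (p_at n i)"
  unfolding price_supported_def price_def
  using card_mono[OF finite_unavailable unavailable_mono]
    psubset_card_mono[OF finite_unavailable unavailable_strict_mono]
  by simp

lemma outcome_at_end:
  assumes "O_at n = {}"
  shows "\<forall>i\<in>I. \<forall>ob\<in>Os. 0 \<le> p_at n i ob"
    and "\<forall>ob\<in>Os. (\<Sum>i\<in>I. p_at n i ob) = quota I \<omega>0 ob"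
    and "\<forall>i\<in>I. (\<Sum>ob\<in>Os. p_at n i ob) = (\<Sum>ob\<in>Os. \<omega>0 i ob)"
    and "\<forall>i\<in>I. sd_geq Os R i (p_at n i) (\<omega>0 i)"
proof -
  have inv: "fttc_invariant I Os R \<omega>0 (\<omega>_at n) (p_at n) (O_at n)"
    using invariant_at by simp
  then have holdings: "p_at n i ob + \<omega>_at n i ob = p_at n i ob" if "i \<in> I" "ob \<in> Os" for i ob
    using assms that by (simp add: fttc_invariant_def)
  have sum_I: "(\<Sum>i\<in>I. p_at n i ob + \<omega>_at n i ob) = (\<Sum>i\<in>I. p_at n i ob)" if "ob \<in> Os" for ob
    using holdings that by (intro sum.cong) auto
  have sum_Os: "(\<Sum>ob\<in>A. p_at n i ob + \<omega>_at n i ob) = (\<Sum>ob\<in>A. p_at n i ob)"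
    if "i \<in> I" "A \<subseteq> Os" for i A
    using holdings that by (intro sum.cong) auto
  show "\<forall>i\<in>I. \<forall>ob\<in>Os. 0 \<le> p_at n i ob"
    and "\<forall>ob\<in>Os. (\<Sum>i\<in>I. p_at n i ob) = quota I \<omega>0 ob"
    and "\<forall>i\<in>I. (\<Sum>ob\<in>Os. p_at n i ob) = (\<Sum>ob\<in>Os. \<omega>0 i ob)"
    using inv sum_I sum_Os[OF _ order_refl] by (simp_all add: fttc_invariant_def)
  show "\<forall>i\<in>I. sd_geq Os R i (p_at n i) (\<omega>0 i)"
    using inv sum_Os by (simp add: fttc_invariant_def sd_geq_def)
qed

lemma not_sd_dominated_at_end:
  assumes "O_at n = {}" "is_assignment I Os \<omega>0 p'"
  shows "\<not> sd_dominates I Os R p' (p_at n)"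
proof (rule not_sd_dominated_if_price_supported)
  show "finite I" "finite Os" using fee by (simp_all add: fee_problem_def)
  show "\<forall>i\<in>I. total_preorder_on Os (R i)" using fee_problem_total_preorder_on[OF fee] by blast
  show "\<forall>x\<in>Os. 1 \<le> price x" by (simp add: price_def)
  show "\<forall>i\<in>I. price_supported Os (R i) price (p_at n i)" using price_supported_at_end by blast
  show "\<forall>i\<in>I. \<forall>x\<in>Os. 0 \<le> p_at n i x" "\<forall>x\<in>Os. (\<Sum>i\<in>I. p_at n i x) = quota I \<omega>0 x"
    by (fact outcome_at_end[OF assms(1)])+
  show "\<forall>i\<in>I. \<forall>x\<in>Os. 0 \<le> p' i x" "\<forall>x\<in>Os. (\<Sum>i\<in>I. p' i x) \<le> quota I \<omega>0 x"
    using assms(2) by (simp_all add: is_assignment_def)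
qed

end

theorem proposition1:
  fixes I :: "'i set" and Os :: "'o set" and R :: "'i \<Rightarrow> 'o \<Rightarrow> 'o \<Rightarrow> bool"
    and \<omega> p :: "'i \<Rightarrow> 'o \<Rightarrow> real"
  assumes "fee_problem I Os R \<omega>"
    and "fttc_output I Os R \<omega> p"
  shows "individually_rational I Os R \<omega> p \<and> sd_efficient I Os R \<omega> p"
proof -
  obtain n s where run: "s 0 = (\<omega>, (\<lambda>_ _. 0), Os)" "\<forall>d<n. fttc_step I Os R (s d) (s (Suc d))"
    and stop: "snd (snd (s n)) = {}" and p: "p = fst (snd (s n))"
    using assms(2) unfolding fttc_output_def by blast
  interpret fttc_run I Os R \<omega> s n
    using assms(1) run by unfold_locales
  note outcome = outcome_at_end[OF stop, folded p]
  have "individually_rational I Os R \<omega> p"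
    using outcome(4) by (simp add: individually_rational_def)
  moreover have "(\<Sum>ob\<in>Os. p i ob) \<le> 1" if "i \<in> I" for i
    using outcome(3) assms(1) that by (simp add: fee_problem_def)
  then have "is_assignment I Os \<omega> p"
    using outcome(1,2) by (simp add: is_assignment_def)
  moreover have "\<not> sd_dominates I Os R p' p" if "is_assignment I Os \<omega> p'" for p'
    using not_sd_dominated_at_end[OF stop that] p by simp
  ultimately show ?thesis by (simp add: sd_efficient_def)
qed

end
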